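(* Let $\epsilon>0$ and let $u^1,u^2$ be smooth functions on $[0,1]^2$; denote also by $u^1,u^2$ their restrictions to the grid $(x_i,y_j)=(i\Delta x,j\Delta y)$, $i=0,\dots,N-1$, $j=0,\dots,M-1$, $(N-1)\Delta x=(M-1)\Delta y=1$. Let $D_x=P_x^{-1}Q_x$, $D_y=P_y^{-1}Q_y$ be summation-by-parts operators with $P_x=\Delta x\,\mathrm{diag}(p^x_0,\dots,p^x_{N-1})$, $P_y=\Delta y\,\mathrm{diag}(p^y_0,\dots,p^y_{M-1})$, positive entries, $Q_x+Q_x^T=R_N-L_N$, $Q_y+Q_y^T=R_M-L_M$; assume moreover that for every smooth $\bar u$ with grid restriction $u$ and every grid function $w$, $\|D_x(u\circ w)-u\circ D_xw\|_{P_x}\le C_0\|\partial_x\bar u\|_{L^\infty}\|w\|_{P_x}$ (and analogously in $y$), with $C_0$ independent of the grid. Let $\mathbf V(t)=(V^1,V^2)$ solve the semi-discrete scheme with mixed boundary treatment and homogeneous data ($\mathbf g=\mathbf h=0$): $$ \mathbf V_t+u^1\circ\mathfrak{d}_x\mathbf V+u^2\circ\mathfrak{d}_y\mathbf V-C\mathbf V+\epsilon\,\mathfrak{curl}^2(\mathbf V)=\mathcal B\mathbf V+\epsilon\begin{pmatrix}(\mathcal U-\mathcal D)(I_N\otimes P_y^{-1})\,\mathfrak{curl}(\mathbf V)\\ -(\mathcal R-\mathcal L)(P_x^{-1}\otimes I_M)\,\mathfrak{curl}(\mathbf V)\end{pmatrix},\quad t>0, $$ where $C=\begin{pmatrix}-\mathfrak{d}_yu^2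 & \mathfrak{d}_yu^1\\ \mathfrak{d}_xu^2 & -\mathfrak{d}_xu^1\end{pmatrix}$ (entries acting by componentwise multiplication) and $\mathcal B=(P_x^{-1}\otimes I_M)(\Sigma_{\mathcal L}\mathcal L+\Sigma_{\mathcal R}\mathcal R)+(I_N\otimes P_y^{-1})(\Sigma_{\mathcal D}\mathcal D+\Sigma_{\mathcal U}\mathcal U)$ with diagonal penalty matrices (entries $(\sigma_{\mathcal K})_{i,j}$) chosen so that $$(\sigma_{\mathcal R})_{N-1,j}\le \tfrac{u^{1,-}(1,y_j)}{2},\quad (\sigma_{\mathcal L})_{0,j}\le-\tfrac{u^{1,+}(0,y_j)}{2},\quad (\sigma_{\mathcal U})_{i,M-1}\le\tfrac{u^{2,-}(x_i,1)}{2},\quad (\sigma_{\mathcal D})_{i,0}\le-\tfrac{u^{2,+}(x_i,0)}{2}.$$ Then $$\|\mathbf V(t)\|_{\mathbf P}^2+\epsilon\int_0^t e^{c(t-s)}\|\mathfrak{curl}(\mathbf V(s))\|_{\mathbf P}^2\,ds\le e^{ct}\|\mathbf V(0)\|_{\mathbf P}^2,$$ where $c$ is a constant depending on $\mathfrak{d}_x,\mathfrak{d}_y$ and the derivatives of $u^1,u^2$, but not on $N$ or $M$.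
   Context: $R_n=\mathrm{diag}(0,\dots,0,1)$, $L_n=\mathrm{diag}(1,0,\dots,0)$ ($n\times n$), $I_n$ identity, $\otimes$ Kronecker product. $\mathfrak{d}_x=D_x\otimes I_M$, $\mathfrak{d}_y=I_N\otimes D_y$, $\mathbf P=P_x\otimes P_y$, $\mathcal R=R_N\otimes I_M$, $\mathcal L=L_N\otimes I_M$, $\mathcal U=I_N\otimes R_M$, $\mathcal D=I_N\otimes L_M$. Grid functions are ordered as $(w_{0,0},w_{0,1},\dots,w_{0,M-1},w_{1,0},\dots,w_{N-1,M-1})^T$; $(u\circ w)_k=u_kw_k$; $\|w\|_{P_x}=(w^TP_xw)^{1/2}$. $(v,w)_{\mathbf P}=v^T\mathbf Pw$, $\|w\|_{\mathbf P}=(w,w)_{\mathbf P}^{1/2}$; for vector grid functions $(\mathbf V,\mathbf W)_{\mathbf P}=(V^1,W^1)_{\mathbf P}+(V^2,W^2)_{\mathbf P}$, and operators and $\mathcal B$ act componentwise. $\mathfrak{curl}(\mathbf V)=\mathfrak{d}_xV^2-\mathfrak{d}_yV^1$, $\mathfrak{curl}^2(\mathbf V)=(-\mathfrak{d}_{yy}V^1+\mathfrak{d}_{xy}V^2,\ \mathfrak{d}_{xy}V^1-\mathfrak{d}_{xx}V^2)$ with $\mathfrak{d}_{xy}=\mathfrak{d}_x\mathfrak{d}_y$, etc. $u^{l,+}=\max(u^l,0)$, $u^{l,-}=\min(u^l,0)$. *)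

theory Defs
  imports "HOL-Analysis.Analysis"
begin

definition smooth_on1 :: "real set \<Rightarrow> (real \<Rightarrow> real) \<Rightarrow> bool" where
  "smooth_on1 S f \<longleftrightarrow> (\<forall>k. \<forall>x\<in>S. ((deriv ^^ k) f) differentiable at x)"

definition smooth01 :: "(real \<Rightarrow> real) \<Rightarrow> bool" where
  "smooth01 f \<longleftrightarrow> (\<exists>S. open S \<and> {0..1} \<subseteq> S \<and> smooth_on1 S f)"

definition pdx :: "(real \<times> real \<Rightarrow> real) \<Rightarrow> real \<times> real \<Rightarrow> real" where
  "pdx f = (\<lambda>(x, y). deriv (\<lambda>s. f (s, y)) x)"

definition pdy :: "(real \<times> real \<Rightarrow> real) \<Rightarrow> real \<times> real \<Rightarrow> real" where
  "pdy f = (\<lambda>(x, y). deriv (\<lambda>s. f (x, s)) y)"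

text \<open>Iterated partial derivatives (True = d/dx, False = d/dy).\<close>
fun ipd :: "bool list \<Rightarrow> (real \<times> real \<Rightarrow> real) \<Rightarrow> real \<times> real \<Rightarrow> real" where
  "ipd [] f = f"
| "ipd (b # bs) f = (if b then pdx else pdy) (ipd bs f)"

definition smooth_on2 :: "(real \<times> real) set \<Rightarrow> (real \<times> real \<Rightarrow> real) \<Rightarrow> bool" where
  "smooth_on2 S f \<longleftrightarrow> (\<forall>bs. continuous_on S (ipd bs f) \<and>
      (\<forall>x y. (x, y) \<in> S \<longrightarrow> (\<lambda>s. ipd bs f (s, y)) differentiable at x
                              \<and> (\<lambda>s. ipd bs f (x, s)) differentiable at y))"

definition smooth_sq :: "(real \<times> real \<Rightarrow> real) \<Rightarrow> bool" where
  "smooth_sq f \<longleftrightarrow> (\<exists>S. open S \<and> {0..1} \<times> {0..1} \<subseteq> S \<and> smooth_on2 S f)"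

definition Linf01 :: "(real \<Rightarrow> real) \<Rightarrow> real" where
  "Linf01 g = Sup ((\<lambda>x. \<bar>g x\<bar>) ` {0..1})"

text \<open>Grid point x_i = i * Delta x with (N-1) Delta x = 1.\<close>
definition gx :: "nat \<Rightarrow> nat \<Rightarrow> real" where
  "gx N i = real i / real (N - 1)"

text \<open>Diagonal of P = Delta x * diag(p_0, ..., p_{N-1}).\<close>
definition Pdiag :: "nat \<Rightarrow> (nat \<Rightarrow> real) \<Rightarrow> nat \<Rightarrow> real" where
  "Pdiag N p i = p i / real (N - 1)"

text \<open>D = P^{-1} Q, with P diagonal given by its diagonal pd.\<close>
definition Dop :: "(nat \<Rightarrow> real) \<Rightarrow> (nat \<Rightarrow> nat \<Rightarrow> real) \<Rightarrow> nat \<Rightarrow> nat \<Rightarrow> real" where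
  "Dop pd Q i k = Q i k / pd i"

definition normP1 :: "nat \<Rightarrow> (nat \<Rightarrow> real) \<Rightarrow> (nat \<Rightarrow> real) \<Rightarrow> real" where
  "normP1 N pd w = sqrt (\<Sum>k<N. pd k * (w k)\<^sup>2)"

text \<open>SBP structure: positive p, and Q + Q^T = R_N - L_N (N x N).\<close>
definition SBP :: "nat \<Rightarrow> (nat \<Rightarrow> real) \<Rightarrow> (nat \<Rightarrow> nat \<Rightarrow> real) \<Rightarrow> bool" where
  "SBP N p Q \<longleftrightarrow> 2 \<le> N \<and> (\<forall>i<N. 0 < p i) \<and>
     (\<forall>i<N. \<forall>k<N. Q i k + Q k i =
        (if i = k \<and> i = N - 1 then 1 else 0) - (if i = k \<and> i = 0 then 1 else 0))"

definition commutator_bound :: "nat \<Rightarrow> (nat \<Rightarrow> real) \<Rightarrow> (nat \<Rightarrow> nat \<Rightarrow> real) \<Rightarrow> real \<Rightarrow> bool" where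
  "commutator_bound N p Q C0 \<longleftrightarrow>
     (\<forall>ub w. smooth01 ub \<longrightarrow>
        normP1 N (Pdiag N p)
          (\<lambda>k. (\<Sum>l<N. Dop (Pdiag N p) Q k l * (ub (gx N l) * w l))
               - ub (gx N k) * (\<Sum>l<N. Dop (Pdiag N p) Q k l * w l))
        \<le> C0 * Linf01 (deriv ub) * normP1 N (Pdiag N p) w)"

section \<open>Two-dimensional grid functions (w i j = w_{i,j}, i<N, j<M)\<close>

type_synonym grid = "nat \<Rightarrow> nat \<Rightarrow> real"

text \<open>d_x = D_x (x) I_M and d_y = I_N (x) D_y.\<close>
definition dx :: "nat \<Rightarrow> (nat \<Rightarrow> nat \<Rightarrow> real) \<Rightarrow> grid \<Rightarrow> grid" where
  "dx N Dx w = (\<lambda>i j. \<Sum>k<N. Dx i k * w k j)"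

definition dy :: "nat \<Rightarrow> (nat \<Rightarrow> nat \<Rightarrow> real) \<Rightarrow> grid \<Rightarrow> grid" where
  "dy M Dy w = (\<lambda>i j. \<Sum>l<M. Dy j l * w i l)"

text \<open>(v, w)_P with P = P_x (x) P_y.\<close>
definition ipP :: "nat \<Rightarrow> nat \<Rightarrow> (nat \<Rightarrow> real) \<Rightarrow> (nat \<Rightarrow> real) \<Rightarrow> grid \<Rightarrow> grid \<Rightarrow> real" where
  "ipP N M px py v w = (\<Sum>i<N. \<Sum>j<M. px i * py j * v i j * w i j)"

definition ug :: "nat \<Rightarrow> nat \<Rightarrow> (real \<times> real \<Rightarrow> real) \<Rightarrow> grid" where
  "ug N M u = (\<lambda>i j. u (gx N i, gx M j))"

definition curlg :: "nat \<Rightarrow> nat \<Rightarrow> (nat \<Rightarrow> nat \<Rightarrow> real) \<Rightarrow> (nat \<Rightarrow> nat \<Rightarrow> real) \<Rightarrow> grid \<Rightarrow> grid \<Rightarrow> grid" where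
  "curlg N M Dx Dy w1 w2 = (\<lambda>i j. dx N Dx w2 i j - dy M Dy w1 i j)"

definition ind :: "bool \<Rightarrow> real" where
  "ind b = (if b then 1 else 0)"

text \<open>B = (P_x^{-1} (x) I)(Sigma_L L + Sigma_R R) + (I (x) P_y^{-1})(Sigma_D D + Sigma_U U), applied to one component.\<close>
definition Bop :: "nat \<Rightarrow> nat \<Rightarrow> (nat \<Rightarrow> real) \<Rightarrow> (nat \<Rightarrow> real) \<Rightarrow> grid \<Rightarrow> grid \<Rightarrow> grid \<Rightarrow> grid \<Rightarrow> grid \<Rightarrow> grid" where
  "Bop N M px py sL sR sD sU w = (\<lambda>i j.
      (sL i j * ind (i = 0) * w i j + sR i j * ind (i = N - 1) * w i j) / px i
    + (sD i j * ind (j = 0) * w i j + sU i j * ind (j = M - 1) * w i j) / py j)"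

definition rhs1 :: "real \<Rightarrow> nat \<Rightarrow> nat \<Rightarrow> (nat \<Rightarrow> real) \<Rightarrow> (nat \<Rightarrow> real) \<Rightarrow>
    (nat \<Rightarrow> nat \<Rightarrow> real) \<Rightarrow> (nat \<Rightarrow> nat \<Rightarrow> real) \<Rightarrow> grid \<Rightarrow> grid \<Rightarrow>
    grid \<Rightarrow> grid \<Rightarrow> grid \<Rightarrow> grid \<Rightarrow> grid \<Rightarrow> grid \<Rightarrow> grid" where
  "rhs1 eps N M px py Dx Dy U1 U2 sL sR sD sU w1 w2 = (\<lambda>i j.
      - U1 i j * dx N Dx w1 i j - U2 i j * dy M Dy w1 i j
      + (- dy M Dy U2 i j * w1 i j + dy M Dy U1 i j * w2 i j)
      - eps * (- dy M Dy (dy M Dy w1) i j + dx N Dx (dy M Dy w2) i j)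
      + Bop N M px py sL sR sD sU w1 i j
      + eps * ((ind (j = M - 1) - ind (j = 0)) * curlg N M Dx Dy w1 w2 i j / py j))"

definition rhs2 :: "real \<Rightarrow> nat \<Rightarrow> nat \<Rightarrow> (nat \<Rightarrow> real) \<Rightarrow> (nat \<Rightarrow> real) \<Rightarrow>
    (nat \<Rightarrow> nat \<Rightarrow> real) \<Rightarrow> (nat \<Rightarrow> nat \<Rightarrow> real) \<Rightarrow> grid \<Rightarrow> grid \<Rightarrow>
    grid \<Rightarrow> grid \<Rightarrow> grid \<Rightarrow> grid \<Rightarrow> grid \<Rightarrow> grid \<Rightarrow> grid" where
  "rhs2 eps N M px py Dx Dy U1 U2 sL sR sD sU w1 w2 = (\<lambda>i j.
      - U1 i j * dx N Dx w2 i j - U2 i j * dy M Dy w2 i j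
      + (dx N Dx U2 i j * w1 i j - dx N Dx U1 i j * w2 i j)
      - eps * (dx N Dx (dy M Dy w1) i j - dx N Dx (dx N Dx w2) i j)
      + Bop N M px py sL sR sD sU w2 i j
      - eps * ((ind (i = N - 1) - ind (i = 0)) * curlg N M Dx Dy w1 w2 i j / px i))"

definition solves :: "real \<Rightarrow> nat \<Rightarrow> nat \<Rightarrow> (nat \<Rightarrow> real) \<Rightarrow> (nat \<Rightarrow> real) \<Rightarrow>
    (nat \<Rightarrow> nat \<Rightarrow> real) \<Rightarrow> (nat \<Rightarrow> nat \<Rightarrow> real) \<Rightarrow> grid \<Rightarrow> grid \<Rightarrow>
    grid \<Rightarrow> grid \<Rightarrow> grid \<Rightarrow> grid \<Rightarrow> (real \<Rightarrow> grid) \<Rightarrow> (real \<Rightarrow> grid) \<Rightarrow> bool" where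
  "solves eps N M px py Dx Dy U1 U2 sL sR sD sU V1 V2 \<longleftrightarrow>
     (\<forall>i<N. \<forall>j<M.
        continuous_on {0..} (\<lambda>t. V1 t i j) \<and> continuous_on {0..} (\<lambda>t. V2 t i j) \<and>
        (\<forall>t>0. ((\<lambda>s. V1 s i j) has_real_derivative
                   rhs1 eps N M px py Dx Dy U1 U2 sL sR sD sU (V1 t) (V2 t) i j) (at t)
              \<and> ((\<lambda>s. V2 s i j) has_real_derivative
                   rhs2 eps N M px py Dx Dy U1 U2 sL sR sD sU (V1 t) (V2 t) i j) (at t)))"

definition penalty_ok :: "nat \<Rightarrow> nat \<Rightarrow> (real \<times> real \<Rightarrow> real) \<Rightarrow> (real \<times> real \<Rightarrow> real) \<Rightarrow>
    grid \<Rightarrow> grid \<Rightarrow> grid \<Rightarrow> grid \<Rightarrow> bool" where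
  "penalty_ok N M u1 u2 sL sR sD sU \<longleftrightarrow>
     (\<forall>j<M. sR (N - 1) j \<le> min (u1 (1, gx M j)) 0 / 2
           \<and> sL 0 j \<le> - max (u1 (0, gx M j)) 0 / 2) \<and>
     (\<forall>i<N. sU i (M - 1) \<le> min (u2 (gx N i, 1)) 0 / 2
           \<and> sD i 0 \<le> - max (u2 (gx N i, 0)) 0 / 2)"

definition dmax :: "nat \<Rightarrow> nat \<Rightarrow> (nat \<Rightarrow> nat \<Rightarrow> real) \<Rightarrow> (nat \<Rightarrow> nat \<Rightarrow> real) \<Rightarrow> grid \<Rightarrow> grid \<Rightarrow> real" where
  "dmax N M Dx Dy U1 U2 = Max ((\<lambda>(i, j). max (max \<bar>dx N Dx U1 i j\<bar> \<bar>dx N Dx U2 i j\<bar>)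
                                              (max \<bar>dy M Dy U1 i j\<bar> \<bar>dy M Dy U2 i j\<bar>))
                               ` ({..<N} \<times> {..<M}))"

end

theory Submission
  imports Defs
begin

text \<open>
  Energy method. Pairing the scheme with \<open>V\<close> in the \<open>P\<close>-inner product, the SBP property
  \<open>Q + Q\<^sup>T = R - L\<close> turns the energy \<open>(w, u \<circ> D w)\<^sub>P\<close> of each advection term into
  \<open>-(w, D (u \<circ> w) - u \<circ> D w)\<^sub>P / 2\<close> plus the boundary terms \<open>\<plusminus> u w\<^sup>2 / 2\<close> at the two ends
  of every grid line. The commutator is controlled by the assumed commutator estimate, i.e. by
  \<open>C\<^sub>0 \<parallel>\<partial>u\<parallel>\<^sub>\<infinity> \<parallel>w\<parallel>\<^sup>2\<close>, and the penalty conditions make the SAT terms dominate the boundary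
  terms. Summation by parts in both directions shows that the viscous term together with its
  boundary correction contributes exactly \<open>-\<epsilon> \<parallel>curl V\<parallel>\<^sup>2\<close>, while the zeroth-order term
  \<open>C V\<close> is bounded by the grid maximum of the discrete derivatives of \<open>u\<close>. Hence
  \<open>d/dt \<parallel>V\<parallel>\<^sup>2 \<le> c \<parallel>V\<parallel>\<^sup>2 - 2 \<epsilon> \<parallel>curl V\<parallel>\<^sup>2\<close>, and the integrating factor \<open>exp (- c t)\<close> gives the
  estimate.
\<close>

section \<open>Summation by parts on one grid line\<close>

lemma Pdiag_pos: "SBP N p Q \<Longrightarrow> i < N \<Longrightarrow> 0 < Pdiag N p i"
  unfolding SBP_def Pdiag_def by auto

lemma Pdiag_mult_Dop: "SBP N p Q \<Longrightarrow> i < N \<Longrightarrow> Pdiag N p i * Dop (Pdiag N p) Q i k = Q i k"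
  using Pdiag_pos[of N p Q i] by (simp add: Dop_def)

lemma sum_mult_Kronecker:
  "i < (N::nat) \<Longrightarrow> (\<Sum>k<N. f k * (if k = i \<and> P then 1 else 0)) = (if P then f i else (0::real))"
  by (cases P) (simp_all add: if_distrib[of "\<lambda>x. _ * x"] cong: if_cong)

lemma sum_mult_ind: "a < (N::nat) \<Longrightarrow> (\<Sum>i<N. f i * ind (i = a)) = (f a :: real)"
  using sum_mult_Kronecker[of a N f True] by (simp add: ind_def)

lemma SBP_summation_by_parts:
  assumes S: "SBP N p Q"
  shows "(\<Sum>i<N. Pdiag N p i * v i * (\<Sum>k<N. Dop (Pdiag N p) Q i k * w k))
       + (\<Sum>i<N. Pdiag N p i * (\<Sum>k<N. Dop (Pdiag N p) Q i k * v k) * w i)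
       = v (N - 1) * w (N - 1) - v 0 * w 0"
proof -
  have N: "2 \<le> N" using S by (simp add: SBP_def)
  have "(\<Sum>i<N. Pdiag N p i * v i * (\<Sum>k<N. Dop (Pdiag N p) Q i k * w k))
      = (\<Sum>i<N. \<Sum>k<N. v i * w k * Q i k)"
    using Pdiag_mult_Dop[OF S] by (intro sum.cong refl) (simp add: sum_distrib_left mult_ac)
  moreover have "(\<Sum>i<N. Pdiag N p i * (\<Sum>k<N. Dop (Pdiag N p) Q i k * v k) * w i)
      = (\<Sum>i<N. \<Sum>k<N. v i * w k * Q k i)"
    using Pdiag_mult_Dop[OF S] by (subst sum.swap) (intro sum.cong refl, simp add: sum_distrib_left sum_distrib_right mult_ac)
  moreover have "(\<Sum>i<N. \<Sum>k<N. v i * w k * Q i k) + (\<Sum>i<N. \<Sum>k<N. v i * w k * Q k i)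
      = (\<Sum>i<N. \<Sum>k<N. v i * w k * ((if k = i \<and> i = N - 1 then 1 else 0) - (if k = i \<and> i = 0 then 1 else 0)))"
    using S unfolding SBP_def by (simp add: sum.distrib[symmetric] distrib_left[symmetric] eq_commute[of _ i for i])
  moreover have "\<dots> = (\<Sum>i<N. (if i = N - 1 then v i * w i else 0) - (if i = 0 then v i * w i else 0))"
    by (intro sum.cong refl) (simp only: right_diff_distrib sum_subtractf sum_mult_Kronecker lessThan_iff)
  moreover have "\<dots> = v (N - 1) * w (N - 1) - v 0 * w 0"
    using N by (simp add: sum_subtractf)
  ultimately show ?thesis by simp
qed

lemma SBP_adjoint_boundary:
  assumes S: "SBP M q Q"
  shows "(\<Sum>j<M. Pdiag M q j * v j * (- (\<Sum>l<M. Dop (Pdiag M q) Q j l * z l)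
            + (ind (j = M - 1) - ind (j = 0)) * z j / Pdiag M q j))
       = (\<Sum>j<M. Pdiag M q j * (\<Sum>l<M. Dop (Pdiag M q) Q j l * v l) * z j)"
proof -
  have M: "2 \<le> M" using S by (simp add: SBP_def)
  have "(\<Sum>j<M. Pdiag M q j * v j * (- (\<Sum>l<M. Dop (Pdiag M q) Q j l * z l)
            + (ind (j = M - 1) - ind (j = 0)) * z j / Pdiag M q j))
      = (\<Sum>j<M. - (Pdiag M q j * v j * (\<Sum>l<M. Dop (Pdiag M q) Q j l * z l))
        + (v j * z j * ind (j = M - 1) - v j * z j * ind (j = 0)))"
    using Pdiag_pos[OF S] by (intro sum.cong refl) (fastforce simp: field_simps)
  also have "\<dots> = - (\<Sum>j<M. Pdiag M q j * v j * (\<Sum>l<M. Dop (Pdiag M q) Q j l * z l))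
        + (\<Sum>j<M. v j * z j * ind (j = M - 1)) - (\<Sum>j<M. v j * z j * ind (j = 0))"
    by (simp add: sum.distrib sum_subtractf sum_negf)
  also have "\<dots> = (\<Sum>j<M. Pdiag M q j * (\<Sum>l<M. Dop (Pdiag M q) Q j l * v l) * z j)"
    using SBP_summation_by_parts[OF S, of v z] M by (simp add: sum_mult_ind)
  finally show ?thesis .
qed

lemma normP1_sq: "\<forall>i<N. 0 \<le> pd i \<Longrightarrow> (normP1 N pd w)\<^sup>2 = (\<Sum>i<N. pd i * (w i)\<^sup>2)"
  unfolding normP1_def by (subst real_sqrt_pow2) (auto intro: sum_nonneg)

lemma weighted_Cauchy_Schwarz:
  assumes "\<forall>i<N. 0 \<le> pd i"
  shows "(\<Sum>i<N. pd i * w i * c i) \<le> normP1 N pd w * normP1 N pd c"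
proof -
  have sq: "\<And>w. (\<Sum>i<N. (sqrt (pd i) * w i)\<^sup>2) = (\<Sum>i<N. pd i * (w i)\<^sup>2)"
    using assms by (intro sum.cong refl) (simp add: power_mult_distrib)
  have "(\<Sum>i<N. pd i * w i * c i) = (\<Sum>i<N. (sqrt (pd i) * w i) * (sqrt (pd i) * c i))"
    using assms by (intro sum.cong refl) (simp add: algebra_simps)
  also have "\<dots> \<le> sqrt ((\<Sum>i<N. (sqrt (pd i) * w i)\<^sup>2) * (\<Sum>i<N. (sqrt (pd i) * c i)\<^sup>2))"
    by (rule real_le_rsqrt[OF Cauchy_Schwarz_ineq_sum])
  finally show ?thesis unfolding normP1_def sq by (simp add: real_sqrt_mult)
qed

lemma commutator_energy_bound:
  assumes S: "SBP N p Q" and CB: "commutator_bound N p Q C0" and ub: "smooth01 ub"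
  shows "(\<Sum>i<N. Pdiag N p i * w i * ((\<Sum>l<N. Dop (Pdiag N p) Q i l * (ub (gx N l) * w l))
              - ub (gx N i) * (\<Sum>l<N. Dop (Pdiag N p) Q i l * w l)))
       \<le> C0 * Linf01 (deriv ub) * (\<Sum>i<N. Pdiag N p i * (w i)\<^sup>2)"
proof -
  let ?n = "normP1 N (Pdiag N p)"
  have pd: "\<forall>i<N. 0 \<le> Pdiag N p i" using Pdiag_pos[OF S] less_imp_le by blast
  have "?n (\<lambda>k. (\<Sum>l<N. Dop (Pdiag N p) Q k l * (ub (gx N l) * w l))
          - ub (gx N k) * (\<Sum>l<N. Dop (Pdiag N p) Q k l * w l)) \<le> C0 * Linf01 (deriv ub) * ?n w"
    using CB ub unfolding commutator_bound_def by blast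
  then have "?n w * ?n (\<lambda>k. (\<Sum>l<N. Dop (Pdiag N p) Q k l * (ub (gx N l) * w l))
          - ub (gx N k) * (\<Sum>l<N. Dop (Pdiag N p) Q k l * w l)) \<le> ?n w * (C0 * Linf01 (deriv ub) * ?n w)"
    by (rule mult_left_mono) (use pd in \<open>auto simp: normP1_def intro!: sum_nonneg\<close>)
  then have "?n w * ?n (\<lambda>k. (\<Sum>l<N. Dop (Pdiag N p) Q k l * (ub (gx N l) * w l))
          - ub (gx N k) * (\<Sum>l<N. Dop (Pdiag N p) Q k l * w l)) \<le> C0 * Linf01 (deriv ub) * (?n w)\<^sup>2"
    by (simp add: power2_eq_square mult_ac)
  with weighted_Cauchy_Schwarz[OF pd] show ?thesis
    unfolding normP1_sq[OF pd] by (rule order.trans)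
qed

lemma SBP_transport_identity:
  assumes "SBP N p Q"
  shows "2 * (\<Sum>i<N. Pdiag N p i * w i * (a i * (\<Sum>k<N. Dop (Pdiag N p) Q i k * w k)))
       = - (\<Sum>i<N. Pdiag N p i * w i * ((\<Sum>l<N. Dop (Pdiag N p) Q i l * (a l * w l))
               - a i * (\<Sum>l<N. Dop (Pdiag N p) Q i l * w l)))
         + a (N - 1) * (w (N - 1))\<^sup>2 - a 0 * (w 0)\<^sup>2"
  using SBP_summation_by_parts[OF assms, of w "\<lambda>i. a i * w i"]
  by (simp add: right_diff_distrib sum_subtractf power2_eq_square algebra_simps)

lemma penalty_sum:
  fixes pd w sL sR :: "nat \<Rightarrow> real"
  assumes "2 \<le> N" and "\<And>i. i < N \<Longrightarrow> pd i \<noteq> 0"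
  shows "(\<Sum>i<N. pd i * w i * ((sL i * ind (i = 0) * w i + sR i * ind (i = N - 1) * w i) / pd i))
       = sL 0 * (w 0)\<^sup>2 + sR (N - 1) * (w (N - 1))\<^sup>2"
proof -
  have "(\<Sum>i<N. pd i * w i * ((sL i * ind (i = 0) * w i + sR i * ind (i = N - 1) * w i) / pd i))
      = (\<Sum>i<N. sL i * (w i)\<^sup>2 * ind (i = 0)) + (\<Sum>i<N. sR i * (w i)\<^sup>2 * ind (i = N - 1))"
    unfolding sum.distrib[symmetric] using assms(2)
    by (intro sum.cong refl) (simp add: field_simps power2_eq_square)
  then show ?thesis using assms(1) by (simp add: sum_mult_ind)
qed

lemma SBP_transport_bound:
  assumes S: "SBP N p Q" and CB: "commutator_bound N p Q C0" and ub: "smooth01 ub"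
    and K: "C0 * Linf01 (deriv ub) \<le> K"
    and sR: "sR (N - 1) \<le> min (ub 1) 0 / 2" and sL: "sL 0 \<le> - max (ub 0) 0 / 2"
  shows "-2 * (\<Sum>i<N. Pdiag N p i * w i * (ub (gx N i) * (\<Sum>k<N. Dop (Pdiag N p) Q i k * w k)))
       + 2 * (\<Sum>i<N. Pdiag N p i * w i * ((sL i * ind (i = 0) * w i + sR i * ind (i = N - 1) * w i) / Pdiag N p i))
       \<le> K * (\<Sum>i<N. Pdiag N p i * w i * w i)"
proof -
  have N: "2 \<le> N" using S by (simp add: SBP_def)
  have "0 \<le> (\<Sum>i<N. Pdiag N p i * (w i)\<^sup>2)"
    using Pdiag_pos[OF S] by (intro sum_nonneg mult_nonneg_nonneg) (auto simp: less_imp_le)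
  then have "C0 * Linf01 (deriv ub) * (\<Sum>i<N. Pdiag N p i * (w i)\<^sup>2) \<le> K * (\<Sum>i<N. Pdiag N p i * w i * w i)"
    using mult_right_mono[OF K] by (simp add: power2_eq_square mult.assoc)
  then have comm: "(\<Sum>i<N. Pdiag N p i * w i * ((\<Sum>l<N. Dop (Pdiag N p) Q i l * (ub (gx N l) * w l))
              - ub (gx N i) * (\<Sum>l<N. Dop (Pdiag N p) Q i l * w l))) \<le> K * (\<Sum>i<N. Pdiag N p i * w i * w i)"
    using commutator_energy_bound[OF S CB ub, where w = w] by linarith
  have gx: "gx N (N - 1) = 1" "gx N 0 = 0" using N by (simp_all add: gx_def)
  have "2 * sR (N - 1) * (w (N - 1))\<^sup>2 \<le> ub 1 * (w (N - 1))\<^sup>2"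
    using sR by (intro mult_right_mono) auto
  moreover have "2 * sL 0 * (w 0)\<^sup>2 \<le> - ub 0 * (w 0)\<^sup>2"
    using sL by (intro mult_right_mono) auto
  moreover note SBP_transport_identity[OF S, where w = w and a = "\<lambda>i. ub (gx N i)", unfolded gx]
  moreover have "(\<Sum>i<N. Pdiag N p i * w i * ((sL i * ind (i = 0) * w i + sR i * ind (i = N - 1) * w i) / Pdiag N p i))
      = sL 0 * (w 0)\<^sup>2 + sR (N - 1) * (w (N - 1))\<^sup>2"
    using Pdiag_pos[OF S] by (intro penalty_sum[OF N]) (metis less_irrefl)
  ultimately show ?thesis
    using comm by linarith
qed

lemma ipP_by_rows: "ipP N M px py v w = (\<Sum>i<N. px i * (\<Sum>j<M. py j * v i j * w i j))"
  unfolding ipP_def by (simp add: sum_distrib_left mult_ac)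

lemma ipP_by_columns: "ipP N M px py v w = (\<Sum>j<M. py j * (\<Sum>i<N. px i * v i j * w i j))"
  unfolding ipP_def by (subst sum.swap) (simp add: sum_distrib_left mult_ac)

lemma ipP_add: "ipP N M px py v (\<lambda>i j. f i j + g i j) = ipP N M px py v f + ipP N M px py v g"
  unfolding ipP_def by (simp add: sum.distrib algebra_simps)

lemma ipP_neg: "ipP N M px py v (\<lambda>i j. - f i j) = - ipP N M px py v f"
  unfolding ipP_def by (simp add: sum_negf)

lemma ipP_scale: "ipP N M px py v (\<lambda>i j. k * f i j) = k * ipP N M px py v f"
  unfolding ipP_def by (simp add: sum_distrib_left mult_ac)

lemma ipP_nonneg: "\<forall>i<N. 0 \<le> px i \<Longrightarrow> \<forall>j<M. 0 \<le> py j \<Longrightarrow> 0 \<le> ipP N M px py w w"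
  unfolding ipP_def by (intro sum_nonneg) (simp add: mult.assoc)

lemma weighted_sum_bound:
  fixes py a b c :: "nat \<Rightarrow> real"
  assumes "\<forall>j<M. 0 \<le> py j" and "\<forall>j<M. -2 * a j + 2 * b j \<le> K * c j"
  shows "-2 * (\<Sum>j<M. py j * a j) + 2 * (\<Sum>j<M. py j * b j) \<le> K * (\<Sum>j<M. py j * c j)"
proof -
  have "(\<Sum>j<M. py j * (-2 * a j + 2 * b j)) \<le> (\<Sum>j<M. py j * (K * c j))"
    using assms by (intro sum_mono mult_left_mono) auto
  moreover have "(\<Sum>j<M. py j * (-2 * a j + 2 * b j)) = -2 * (\<Sum>j<M. py j * a j) + 2 * (\<Sum>j<M. py j * b j)"
    by (simp add: right_diff_distrib sum_subtractf sum_distrib_left mult.left_commute sum_negf)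
  ultimately show ?thesis
    by (simp add: sum_distrib_left mult.left_commute)
qed

lemma dx_dy_commute: "dx N Dx (dy M Dy w) i j = dy M Dy (dx N Dx w) i j"
  unfolding dx_def dy_def by (simp add: sum_distrib_left mult_ac, rule sum.swap)

lemma dy_curlg:
  "dy M Dy (curlg N M Dx Dy w1 w2) i j = dx N Dx (dy M Dy w2) i j - dy M Dy (dy M Dy w1) i j"
  unfolding curlg_def dx_dy_commute by (simp add: dy_def right_diff_distrib sum_subtractf)

lemma dx_curlg:
  "dx N Dx (curlg N M Dx Dy w1 w2) i j = dx N Dx (dx N Dx w2) i j - dx N Dx (dy M Dy w1) i j"
  unfolding curlg_def by (simp add: dx_def right_diff_distrib sum_subtractf)

lemma gx_in_unit_interval: "i < N \<Longrightarrow> gx N i \<in> {0..1}"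
  unfolding gx_def by (auto simp: divide_le_eq_1 of_nat_diff)

lemma dmax_ge:
  assumes "i < N" "j < M"
  shows "\<bar>dx N Dx U1 i j\<bar> \<le> dmax N M Dx Dy U1 U2 \<and> \<bar>dx N Dx U2 i j\<bar> \<le> dmax N M Dx Dy U1 U2
       \<and> \<bar>dy M Dy U1 i j\<bar> \<le> dmax N M Dx Dy U1 U2 \<and> \<bar>dy M Dy U2 i j\<bar> \<le> dmax N M Dx Dy U1 U2"
proof -
  let ?g = "\<lambda>(i, j). max (max \<bar>dx N Dx U1 i j\<bar> \<bar>dx N Dx U2 i j\<bar>) (max \<bar>dy M Dy U1 i j\<bar> \<bar>dy M Dy U2 i j\<bar>)"
  have "?g (i, j) \<le> Max (?g ` ({..<N} \<times> {..<M}))"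
    using assms by (intro Max_ge) auto
  then show ?thesis unfolding dmax_def by auto
qed

lemma continuous_on_ipP:
  assumes "\<forall>i<N. \<forall>j<M. continuous_on T (\<lambda>s. A s i j) \<and> continuous_on T (\<lambda>s. B s i j)"
  shows "continuous_on T (\<lambda>s. ipP N M px py (A s) (B s))"
  unfolding ipP_def using assms by (intro continuous_intros) auto

lemma continuous_on_curlg:
  assumes "\<forall>i<N. \<forall>j<M. continuous_on T (\<lambda>s. V1 s i j) \<and> continuous_on T (\<lambda>s. V2 s i j)"
  shows "\<forall>i<N. \<forall>j<M. continuous_on T (\<lambda>s. curlg N M Dx Dy (V1 s) (V2 s) i j)"
  unfolding curlg_def dx_def dy_def using assms by (auto intro!: continuous_intros)

lemma has_real_derivative_ipP_square:
  assumes "\<forall>i<N. \<forall>j<M. ((\<lambda>s. V s i j) has_real_derivative R i j) (at s0)"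
  shows "((\<lambda>s. ipP N M px py (V s) (V s)) has_real_derivative 2 * ipP N M px py (V s0) R) (at s0)"
proof -
  have "((\<lambda>s. \<Sum>i<N. \<Sum>j<M. px i * py j * V s i j * V s i j) has_real_derivative
        (\<Sum>i<N. \<Sum>j<M. px i * py j * V s0 i j * R i j + px i * py j * R i j * V s0 i j)) (at s0)"
    using assms by (auto intro!: DERIV_sum derivative_eq_intros)
  then show ?thesis unfolding ipP_def by (simp add: sum_distrib_left algebra_simps)
qed

section \<open>The energy rate\<close>

text \<open>The two halves \<open>(P\<^sub>x\<^sup>-\<^sup>1 \<otimes> I)(\<Sigma>\<^sub>L L + \<Sigma>\<^sub>R R)\<close> and
  \<open>(I \<otimes> P\<^sub>y\<^sup>-\<^sup>1)(\<Sigma>\<^sub>D D + \<Sigma>\<^sub>U U)\<close> of the penalty operator \<open>B\<close>.\<close>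

definition sat_x :: "nat \<Rightarrow> (nat \<Rightarrow> real) \<Rightarrow> grid \<Rightarrow> grid \<Rightarrow> grid \<Rightarrow> grid" where
  "sat_x N px sL sR w = (\<lambda>i j. (sL i j * ind (i = 0) * w i j + sR i j * ind (i = N - 1) * w i j) / px i)"

definition sat_y :: "nat \<Rightarrow> (nat \<Rightarrow> real) \<Rightarrow> grid \<Rightarrow> grid \<Rightarrow> grid \<Rightarrow> grid" where
  "sat_y M py sD sU w = (\<lambda>i j. (sD i j * ind (j = 0) * w i j + sU i j * ind (j = M - 1) * w i j) / py j)"

text \<open>The two components of \<open>-curl\<^sup>2(V)\<close> together with their boundary corrections.\<close>

definition viscous1 :: "nat \<Rightarrow> nat \<Rightarrow> (nat \<Rightarrow> real) \<Rightarrow> (nat \<Rightarrow> nat \<Rightarrow> real) \<Rightarrow>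
    (nat \<Rightarrow> nat \<Rightarrow> real) \<Rightarrow> grid \<Rightarrow> grid \<Rightarrow> grid" where
  "viscous1 N M py Dx Dy w1 w2 = (\<lambda>i j. - (- dy M Dy (dy M Dy w1) i j + dx N Dx (dy M Dy w2) i j)
      + (ind (j = M - 1) - ind (j = 0)) * curlg N M Dx Dy w1 w2 i j / py j)"

definition viscous2 :: "nat \<Rightarrow> nat \<Rightarrow> (nat \<Rightarrow> real) \<Rightarrow> (nat \<Rightarrow> nat \<Rightarrow> real) \<Rightarrow>
    (nat \<Rightarrow> nat \<Rightarrow> real) \<Rightarrow> grid \<Rightarrow> grid \<Rightarrow> grid" where
  "viscous2 N M px Dx Dy w1 w2 = (\<lambda>i j. - (dx N Dx (dy M Dy w1) i j - dx N Dx (dx N Dx w2) i j)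
      - (ind (i = N - 1) - ind (i = 0)) * curlg N M Dx Dy w1 w2 i j / px i)"

lemma rhs1_split:
  "rhs1 eps N M px py Dx Dy U1 U2 sL sR sD sU w1 w2 = (\<lambda>i j.
      (- (U1 i j * dx N Dx w1 i j) + sat_x N px sL sR w1 i j)
    + (- (U2 i j * dy M Dy w1 i j) + sat_y M py sD sU w1 i j)
    + (- dy M Dy U2 i j * w1 i j + dy M Dy U1 i j * w2 i j) + eps * viscous1 N M py Dx Dy w1 w2 i j)"
  unfolding rhs1_def Bop_def sat_x_def sat_y_def viscous1_def
  by (simp add: fun_eq_iff algebra_simps add_divide_distrib)

lemma rhs2_split:
  "rhs2 eps N M px py Dx Dy U1 U2 sL sR sD sU w1 w2 = (\<lambda>i j.
      (- (U1 i j * dx N Dx w2 i j) + sat_x N px sL sR w2 i j)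
    + (- (U2 i j * dy M Dy w2 i j) + sat_y M py sD sU w2 i j)
    + (dx N Dx U2 i j * w1 i j - dx N Dx U1 i j * w2 i j) + eps * viscous2 N M px Dx Dy w1 w2 i j)"
  unfolding rhs2_def Bop_def sat_x_def sat_y_def viscous2_def
  by (simp add: fun_eq_iff algebra_simps add_divide_distrib)

lemma transport_bound_x:
  assumes S: "SBP N p Qx" and CB: "commutator_bound N p Qx C0" and py: "\<forall>j<M. 0 \<le> py j"
    and ub: "\<forall>j<M. smooth01 (\<lambda>x. u (x, gx M j)) \<and> C0 * Linf01 (deriv (\<lambda>x. u (x, gx M j))) \<le> K"
    and pen: "\<forall>j<M. sR (N - 1) j \<le> min (u (1, gx M j)) 0 / 2 \<and> sL 0 j \<le> - max (u (0, gx M j)) 0 / 2"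
  shows "-2 * ipP N M (Pdiag N p) py w (\<lambda>i j. ug N M u i j * dx N (Dop (Pdiag N p) Qx) w i j)
       + 2 * ipP N M (Pdiag N p) py w (sat_x N (Pdiag N p) sL sR w)
       \<le> K * ipP N M (Pdiag N p) py w w"
  unfolding ipP_by_columns ug_def dx_def sat_x_def
proof (rule weighted_sum_bound[OF py], intro allI impI)
  fix j assume "j < M"
  with ub pen show "-2 * (\<Sum>i<N. Pdiag N p i * w i j * (u (gx N i, gx M j) * (\<Sum>k<N. Dop (Pdiag N p) Qx i k * w k j)))
      + 2 * (\<Sum>i<N. Pdiag N p i * w i j * ((sL i j * ind (i = 0) * w i j + sR i j * ind (i = N - 1) * w i j) / Pdiag N p i))
      \<le> K * (\<Sum>i<N. Pdiag N p i * w i j * w i j)"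
    by (intro SBP_transport_bound[OF S CB, where ub = "\<lambda>x. u (x, gx M j)" and w = "\<lambda>i. w i j"]) auto
qed

lemma transport_bound_y:
  assumes S: "SBP M q Qy" and CB: "commutator_bound M q Qy C0" and px: "\<forall>i<N. 0 \<le> px i"
    and ub: "\<forall>i<N. smooth01 (\<lambda>y. u (gx N i, y)) \<and> C0 * Linf01 (deriv (\<lambda>y. u (gx N i, y))) \<le> K"
    and pen: "\<forall>i<N. sU i (M - 1) \<le> min (u (gx N i, 1)) 0 / 2 \<and> sD i 0 \<le> - max (u (gx N i, 0)) 0 / 2"
  shows "-2 * ipP N M px (Pdiag M q) w (\<lambda>i j. ug N M u i j * dy M (Dop (Pdiag M q) Qy) w i j)
       + 2 * ipP N M px (Pdiag M q) w (sat_y M (Pdiag M q) sD sU w)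
       \<le> K * ipP N M px (Pdiag M q) w w"
  unfolding ipP_by_rows ug_def dy_def sat_y_def
proof (rule weighted_sum_bound[OF px], intro allI impI)
  fix i assume "i < N"
  with ub pen show "-2 * (\<Sum>j<M. Pdiag M q j * w i j * (u (gx N i, gx M j) * (\<Sum>l<M. Dop (Pdiag M q) Qy j l * w i l)))
      + 2 * (\<Sum>j<M. Pdiag M q j * w i j * ((sD i j * ind (j = 0) * w i j + sU i j * ind (j = M - 1) * w i j) / Pdiag M q j))
      \<le> K * (\<Sum>j<M. Pdiag M q j * w i j * w i j)"
    by (intro SBP_transport_bound[OF S CB, where ub = "\<lambda>y. u (gx N i, y)" and w = "\<lambda>j. w i j"]) auto
qed

lemma curl_dissipation_identity:
  fixes w1 w2 :: grid
  assumes Sx: "SBP N p Qx" and Sy: "SBP M q Qy"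
  defines "px \<equiv> Pdiag N p" and "py \<equiv> Pdiag M q"
  defines "Dx \<equiv> Dop px Qx" and "Dy \<equiv> Dop py Qy"
  defines "om \<equiv> curlg N M Dx Dy w1 w2"
  shows "ipP N M px py w1 (viscous1 N M py Dx Dy w1 w2) + ipP N M px py w2 (viscous2 N M px Dx Dy w1 w2)
       = - ipP N M px py om om"
proof -
  have "ipP N M px py w1 (viscous1 N M py Dx Dy w1 w2)
      = ipP N M px py w1 (\<lambda>i j. - dy M Dy om i j + (ind (j = M - 1) - ind (j = 0)) * om i j / py j)"
    unfolding viscous1_def om_def dy_curlg by simp
  also have "\<dots> = (\<Sum>i<N. px i * (\<Sum>j<M. py j * w1 i j * (- (\<Sum>l<M. Dy j l * om i l)
            + (ind (j = M - 1) - ind (j = 0)) * om i j / py j)))"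
    unfolding ipP_by_rows dy_def ..
  also have "\<dots> = ipP N M px py (dy M Dy w1) om"
    unfolding ipP_by_rows py_def Dy_def SBP_adjoint_boundary[OF Sy] by (simp add: dy_def)
  finally have E1: "ipP N M px py w1 (viscous1 N M py Dx Dy w1 w2) = ipP N M px py (dy M Dy w1) om" .
  have "ipP N M px py w2 (viscous2 N M px Dx Dy w1 w2)
      = - ipP N M px py w2 (\<lambda>i j. - dx N Dx om i j + (ind (i = N - 1) - ind (i = 0)) * om i j / px i)"
    unfolding viscous2_def om_def dx_curlg ipP_def by (simp add: sum_negf[symmetric] algebra_simps)
  also have "\<dots> = - (\<Sum>j<M. py j * (\<Sum>i<N. px i * w2 i j * (- (\<Sum>l<N. Dx i l * om l j)
            + (ind (i = N - 1) - ind (i = 0)) * om i j / px i)))"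
    unfolding ipP_by_columns dx_def ..
  also have "\<dots> = - ipP N M px py (dx N Dx w2) om"
    unfolding ipP_by_columns px_def Dx_def SBP_adjoint_boundary[OF Sx] by (simp add: dx_def)
  finally have E2: "ipP N M px py w2 (viscous2 N M px Dx Dy w1 w2) = - ipP N M px py (dx N Dx w2) om" .
  have "ipP N M px py (dy M Dy w1) om - ipP N M px py (dx N Dx w2) om = - ipP N M px py om om"
    unfolding ipP_def om_def curlg_def by (simp add: sum_subtractf[symmetric] sum_negf[symmetric] algebra_simps)
  with E1 E2 show ?thesis by simp
qed

lemma quadratic_form_bound:
  fixes a b c e d x y :: real
  assumes "\<bar>a\<bar> \<le> d" "\<bar>b\<bar> \<le> d" "\<bar>c\<bar> \<le> d" "\<bar>e\<bar> \<le> d"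
  shows "x * (- a * x + b * y) + y * (c * x - e * y) \<le> 2 * d * (x * x + y * y)"
proof -
  have "- a * (x * x) \<le> d * (x * x)" "- e * (y * y) \<le> d * (y * y)"
    using assms(1,4) by (intro mult_right_mono; simp)+
  moreover have "(b + c) * (x * y) \<le> \<bar>b + c\<bar> * \<bar>x * y\<bar>"
    by (metis abs_ge_self abs_mult)
  moreover have "\<bar>b + c\<bar> * \<bar>x * y\<bar> \<le> (2 * d) * \<bar>x * y\<bar>"
    using assms(2,3) by (intro mult_right_mono) auto
  moreover have "(2 * d) * \<bar>x * y\<bar> = d * (2 * \<bar>x * y\<bar>)"
    by simp
  moreover have "d * (2 * \<bar>x * y\<bar>) \<le> d * (x * x + y * y)"
    using sum_squares_bound[of "\<bar>x\<bar>" "\<bar>y\<bar>"] assms(1)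
    by (intro mult_left_mono) (auto simp: abs_mult power2_eq_square)
  moreover have "x * (- a * x + b * y) + y * (c * x - e * y) = - a * (x * x) + - e * (y * y) + (b + c) * (x * y)"
    by algebra
  moreover have "2 * d * (x * x + y * y) = d * (x * x) + d * (y * y) + d * (x * x + y * y)"
    by algebra
  ultimately show ?thesis by linarith
qed

lemma zeroth_order_bound:
  assumes px: "\<forall>i<N. 0 \<le> px i" and py: "\<forall>j<M. 0 \<le> py j"
    and bd: "\<forall>i<N. \<forall>j<M. \<bar>a i j\<bar> \<le> d \<and> \<bar>b i j\<bar> \<le> d \<and> \<bar>c i j\<bar> \<le> d \<and> \<bar>e i j\<bar> \<le> d"
  shows "ipP N M px py w1 (\<lambda>i j. - a i j * w1 i j + b i j * w2 i j)
       + ipP N M px py w2 (\<lambda>i j. c i j * w1 i j - e i j * w2 i j)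
       \<le> 2 * d * (ipP N M px py w1 w1 + ipP N M px py w2 w2)"
proof -
  have "ipP N M px py w1 (\<lambda>i j. - a i j * w1 i j + b i j * w2 i j)
       + ipP N M px py w2 (\<lambda>i j. c i j * w1 i j - e i j * w2 i j)
     = (\<Sum>i<N. \<Sum>j<M. px i * py j * (w1 i j * (- a i j * w1 i j + b i j * w2 i j)
                                      + w2 i j * (c i j * w1 i j - e i j * w2 i j)))"
    unfolding ipP_def by (simp add: sum.distrib[symmetric] algebra_simps)
  also have "\<dots> \<le> (\<Sum>i<N. \<Sum>j<M. px i * py j * (2 * d * (w1 i j * w1 i j + w2 i j * w2 i j)))"
    using px py bd by (intro sum_mono mult_left_mono quadratic_form_bound) auto
  also have "\<dots> = 2 * d * (ipP N M px py w1 w1 + ipP N M px py w2 w2)"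
    unfolding ipP_def by (simp add: sum.distrib[symmetric] sum_distrib_left algebra_simps)
  finally show ?thesis .
qed

lemma energy_rate_bound:
  fixes w1 w2 :: grid
  assumes Sx: "SBP N p Qx" and Sy: "SBP M q Qy"
    and CBx: "commutator_bound N p Qx C0" and CBy: "commutator_bound M q Qy C0"
    and Kx: "\<forall>y\<in>{0..1}. smooth01 (\<lambda>x. u1 (x, y)) \<and> C0 * Linf01 (deriv (\<lambda>x. u1 (x, y))) \<le> K"
    and Ky: "\<forall>x\<in>{0..1}. smooth01 (\<lambda>y. u2 (x, y)) \<and> C0 * Linf01 (deriv (\<lambda>y. u2 (x, y))) \<le> K"
    and pen: "penalty_ok N M u1 u2 sL sR sD sU"
  defines "px \<equiv> Pdiag N p" and "py \<equiv> Pdiag M q"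
  defines "Dx \<equiv> Dop px Qx" and "Dy \<equiv> Dop py Qy"
  defines "U1 \<equiv> ug N M u1" and "U2 \<equiv> ug N M u2"
  defines "om \<equiv> curlg N M Dx Dy w1 w2"
  shows "2 * ipP N M px py w1 (rhs1 eps N M px py Dx Dy U1 U2 sL sR sD sU w1 w2)
       + 2 * ipP N M px py w2 (rhs2 eps N M px py Dx Dy U1 U2 sL sR sD sU w1 w2)
       \<le> (2 * K + 4 * dmax N M Dx Dy U1 U2) * (ipP N M px py w1 w1 + ipP N M px py w2 w2)
         - 2 * eps * ipP N M px py om om"
proof -
  let ?ip = "ipP N M px py" and ?d = "dmax N M Dx Dy U1 U2"
  have px0: "\<forall>i<N. 0 \<le> px i" and py0: "\<forall>j<M. 0 \<le> py j"
    using Pdiag_pos[OF Sx] Pdiag_pos[OF Sy] unfolding px_def py_def by (auto intro: less_imp_le)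
  have X: "-2 * ?ip w (\<lambda>i j. U1 i j * dx N Dx w i j) + 2 * ?ip w (sat_x N px sL sR w) \<le> K * ?ip w w" for w
    unfolding px_def U1_def Dx_def
    using Kx gx_in_unit_interval pen unfolding penalty_ok_def
    by (intro transport_bound_x[OF Sx CBx py0]) auto
  have Y: "-2 * ?ip w (\<lambda>i j. U2 i j * dy M Dy w i j) + 2 * ?ip w (sat_y M py sD sU w) \<le> K * ?ip w w" for w
    unfolding py_def U2_def Dy_def
    using Ky gx_in_unit_interval pen unfolding penalty_ok_def
    by (intro transport_bound_y[OF Sy CBy px0]) auto
  have Z: "?ip w1 (\<lambda>i j. - dy M Dy U2 i j * w1 i j + dy M Dy U1 i j * w2 i j)
       + ?ip w2 (\<lambda>i j. dx N Dx U2 i j * w1 i j - dx N Dx U1 i j * w2 i j)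
       \<le> 2 * ?d * (?ip w1 w1 + ?ip w2 w2)"
    using dmax_ge by (intro zeroth_order_bound[OF px0 py0]) auto
  have V: "?ip w1 (viscous1 N M py Dx Dy w1 w2) + ?ip w2 (viscous2 N M px Dx Dy w1 w2) = - ?ip om om"
    unfolding om_def px_def py_def Dx_def Dy_def by (rule curl_dissipation_identity[OF Sx Sy])
  have "2 * ?ip w1 (rhs1 eps N M px py Dx Dy U1 U2 sL sR sD sU w1 w2)
      + 2 * ?ip w2 (rhs2 eps N M px py Dx Dy U1 U2 sL sR sD sU w1 w2)
     = (-2 * ?ip w1 (\<lambda>i j. U1 i j * dx N Dx w1 i j) + 2 * ?ip w1 (sat_x N px sL sR w1))
     + (-2 * ?ip w1 (\<lambda>i j. U2 i j * dy M Dy w1 i j) + 2 * ?ip w1 (sat_y M py sD sU w1))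
     + (-2 * ?ip w2 (\<lambda>i j. U1 i j * dx N Dx w2 i j) + 2 * ?ip w2 (sat_x N px sL sR w2))
     + (-2 * ?ip w2 (\<lambda>i j. U2 i j * dy M Dy w2 i j) + 2 * ?ip w2 (sat_y M py sD sU w2))
     + 2 * (?ip w1 (\<lambda>i j. - dy M Dy U2 i j * w1 i j + dy M Dy U1 i j * w2 i j)
          + ?ip w2 (\<lambda>i j. dx N Dx U2 i j * w1 i j - dx N Dx U1 i j * w2 i j))
     + 2 * eps * (?ip w1 (viscous1 N M py Dx Dy w1 w2) + ?ip w2 (viscous2 N M px Dx Dy w1 w2))"
    unfolding rhs1_split rhs2_split by (simp only: ipP_add ipP_neg ipP_scale) (simp add: algebra_simps)
  then show ?thesis
    using X[of w1] X[of w2] Y[of w1] Y[of w2] Z unfolding V by (simp add: algebra_simps)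
qed

section \<open>Gronwall's inequality\<close>

lemma integrating_factor_bound:
  fixes n W :: "real \<Rightarrow> real"
  assumes t: "0 \<le> t"
    and cn: "continuous_on {0..t} n" and cW: "continuous_on {0..t} W"
    and D: "\<forall>s. 0 < s \<longrightarrow> s < t \<longrightarrow> (\<exists>n'. (n has_real_derivative n') (at s) \<and> n' \<le> c * n s - e * W s)"
  shows "exp (- c * t) * n t + e * integral {0..t} (\<lambda>r. exp (- c * r) * W r) \<le> n 0"
proof -
  define h where "h r = exp (- c * r) * W r" for r
  define g where "g s = exp (- c * s) * n s + e * integral {0..s} h" for s
  have ch: "continuous_on {0..t} h" unfolding h_def by (intro continuous_intros cW)
  have Ih: "((\<lambda>x. integral {0..x} h) has_real_derivative h s) (at s within {0..t})" if "s \<in> {0..t}" for s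
    using integral_has_real_derivative[OF ch that] .
  have cg: "continuous_on {0..t} g"
    unfolding g_def by (intro continuous_intros cn DERIV_continuous_on[OF Ih])
  have dg: "\<exists>y. (g has_real_derivative y) (at s) \<and> y \<le> 0" if s: "0 < s" "s < t" for s
  proof -
    obtain n' where n': "(n has_real_derivative n') (at s)" "n' \<le> c * n s - e * W s"
      using D s by blast
    have "at s within {0..t} = at s" by (rule at_within_interior) (use s in simp)
    then have I: "((\<lambda>x. integral {0..x} h) has_real_derivative h s) (at s)"
      using Ih[of s] s by simp
    have "((\<lambda>s. exp (- c * s)) has_real_derivative exp (- c * s) * (- c)) (at s)"
      by (auto intro!: derivative_eq_intros)
    from DERIV_add[OF DERIV_mult'[OF this n'(1)] DERIV_cmult[OF I, of e]]
    have "(g has_real_derivative exp (- c * s) * (n' - (c * n s - e * W s))) (at s)"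
      unfolding g_def h_def by (simp add: algebra_simps)
    moreover have "exp (- c * s) * (n' - (c * n s - e * W s)) \<le> 0"
      using n'(2) by (simp add: mult_nonneg_nonpos)
    ultimately show ?thesis by blast
  qed
  have "g t \<le> g 0" by (rule DERIV_nonpos_imp_decreasing_open[OF t dg cg])
  then show ?thesis unfolding g_def h_def by simp
qed

lemma Gronwall_dissipative:
  fixes n W :: "real \<Rightarrow> real"
  assumes t: "0 \<le> t"
    and cn: "continuous_on {0..t} n" and cW: "continuous_on {0..t} W"
    and D: "\<forall>s. 0 < s \<longrightarrow> s < t \<longrightarrow> (\<exists>n'. (n has_real_derivative n') (at s) \<and> n' \<le> c * n s - e * W s)"
  shows "n t + e * integral {0..t} (\<lambda>s. exp (c * (t - s)) * W s) \<le> exp (c * t) * n 0"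
proof -
  let ?I = "integral {0..t} (\<lambda>r. exp (- c * r) * W r)"
  have "(\<lambda>s. exp (c * (t - s)) * W s) = (\<lambda>s. exp (c * t) * (exp (- c * s) * W s))"
    by (simp add: fun_eq_iff right_diff_distrib exp_diff exp_minus field_simps)
  moreover have "(\<lambda>r. exp (- c * r) * W r) integrable_on {0..t}"
    by (intro integrable_continuous_interval continuous_intros cW)
  ultimately have "integral {0..t} (\<lambda>s. exp (c * (t - s)) * W s) = exp (c * t) * ?I"
    using integral_mult by simp
  moreover have "exp (c * t) * (exp (- c * t) * n t + e * ?I) \<le> exp (c * t) * n 0"
    using integrating_factor_bound[OF t cn cW D] by simp
  moreover have "exp (c * t) * exp (- c * t) = 1" by (simp flip: exp_add)
  ultimately show ?thesis by (simp add: algebra_simps)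
qed

section \<open>Smooth velocity fields\<close>

lemma funpow_deriv_slice_x: "(deriv ^^ k) (\<lambda>x. u (x, y)) = (\<lambda>x. ipd (replicate k True) u (x, y))"
  by (induction k) (simp_all add: pdx_def)

lemma funpow_deriv_slice_y: "(deriv ^^ k) (\<lambda>y. u (x, y)) = (\<lambda>y. ipd (replicate k False) u (x, y))"
  by (induction k) (simp_all add: pdy_def)

lemma smooth01_slice_x:
  assumes "smooth_sq u" "y \<in> {0..1}"
  shows "smooth01 (\<lambda>x. u (x, y))"
proof -
  obtain S where S: "open S" "{0..1} \<times> {0..1} \<subseteq> S" "smooth_on2 S u"
    using assms(1) unfolding smooth_sq_def by blast
  have "open ((\<lambda>x. (x, y)) -` S)"
    using S(1) by (intro continuous_open_vimage) (auto intro!: continuous_intros)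
  moreover have "{0..1} \<subseteq> (\<lambda>x. (x, y)) -` S" using S(2) assms(2) by (auto simp: subset_iff)
  moreover have "smooth_on1 ((\<lambda>x. (x, y)) -` S) (\<lambda>x. u (x, y))"
    using S(3) unfolding smooth_on1_def funpow_deriv_slice_x smooth_on2_def by auto
  ultimately show ?thesis unfolding smooth01_def by blast
qed

lemma smooth01_slice_y:
  assumes "smooth_sq u" "x \<in> {0..1}"
  shows "smooth01 (\<lambda>y. u (x, y))"
proof -
  obtain S where S: "open S" "{0..1} \<times> {0..1} \<subseteq> S" "smooth_on2 S u"
    using assms(1) unfolding smooth_sq_def by blast
  have "open ((\<lambda>y. (x, y)) -` S)"
    using S(1) by (intro continuous_open_vimage) (auto intro!: continuous_intros)
  moreover have "{0..1} \<subseteq> (\<lambda>y. (x, y)) -` S" using S(2) assms(2) by (auto simp: subset_iff)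
  moreover have "smooth_on1 ((\<lambda>y. (x, y)) -` S) (\<lambda>y. u (x, y))"
    using S(3) unfolding smooth_on1_def funpow_deriv_slice_y smooth_on2_def by auto
  ultimately show ?thesis unfolding smooth01_def by blast
qed

lemma smooth_sq_ipd_bounded:
  assumes "smooth_sq u"
  shows "\<exists>B. \<forall>z\<in>{0..1} \<times> {0..1}. \<bar>ipd bs u z\<bar> \<le> B"
proof -
  obtain S where "{0..1} \<times> {0..1} \<subseteq> S" "smooth_on2 S u"
    using assms unfolding smooth_sq_def by blast
  then have "continuous_on ({0..1} \<times> {0..1}) (ipd bs u)"
    unfolding smooth_on2_def by (meson continuous_on_subset)
  then have "bounded (ipd bs u ` ({0..1::real} \<times> {0..1::real}))"
    by (intro compact_imp_bounded compact_continuous_image compact_Times compact_Icc)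
  then show ?thesis unfolding bounded_iff by auto
qed

lemma Linf01_le:
  assumes "\<forall>x\<in>{0..1}. \<bar>g x\<bar> \<le> B"
  shows "0 \<le> Linf01 g \<and> Linf01 g \<le> B"
proof -
  have "bdd_above ((\<lambda>x. \<bar>g x\<bar>) ` {0..1})" using assms by (auto intro: bdd_aboveI2)
  then have "\<bar>g 0\<bar> \<le> Linf01 g" unfolding Linf01_def by (intro cSup_upper) auto
  moreover have "Linf01 g \<le> B" unfolding Linf01_def using assms by (intro cSup_least) auto
  ultimately show ?thesis by linarith
qed

lemma smooth_sq_commutator_constant:
  assumes "smooth_sq u1" "smooth_sq u2"
  obtains K where "\<forall>y\<in>{0..1}. smooth01 (\<lambda>x. u1 (x, y)) \<and> C0 * Linf01 (deriv (\<lambda>x. u1 (x, y))) \<le> K"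
    and "\<forall>x\<in>{0..1}. smooth01 (\<lambda>y. u2 (x, y)) \<and> C0 * Linf01 (deriv (\<lambda>y. u2 (x, y))) \<le> K"
proof -
  obtain B1 where B1: "\<forall>z\<in>{0..1} \<times> {0..1}. \<bar>ipd [True] u1 z\<bar> \<le> B1"
    using smooth_sq_ipd_bounded[OF assms(1)] by blast
  obtain B2 where B2: "\<forall>z\<in>{0..1} \<times> {0..1}. \<bar>ipd [False] u2 z\<bar> \<le> B2"
    using smooth_sq_ipd_bounded[OF assms(2)] by blast
  define B where "B = max B1 B2"
  have CL: "C0 * L \<le> \<bar>C0\<bar> * B" if "0 \<le> L" "L \<le> B" for L
    using that by (metis abs_ge_self abs_ge_zero mult_mono)
  have "C0 * Linf01 (deriv (\<lambda>x. u1 (x, y))) \<le> \<bar>C0\<bar> * B" if "y \<in> {0..1}" for y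
    using B1 that by (intro CL Linf01_le[THEN conjunct1] Linf01_le[THEN conjunct2])
      (force simp: pdx_def B_def)+
  moreover have "C0 * Linf01 (deriv (\<lambda>y. u2 (x, y))) \<le> \<bar>C0\<bar> * B" if "x \<in> {0..1}" for x
    using B2 that by (intro CL Linf01_le[THEN conjunct1] Linf01_le[THEN conjunct2])
      (force simp: pdy_def B_def)+
  ultimately show ?thesis
    using that smooth01_slice_x[OF assms(1)] smooth01_slice_y[OF assms(2)] by blast
qed

lemma energy_estimate:
  fixes V1 V2 :: "real \<Rightarrow> grid"
  assumes eps: "0 < eps" and Sx: "SBP N p Qx" and Sy: "SBP M q Qy"
    and CBx: "commutator_bound N p Qx C0" and CBy: "commutator_bound M q Qy C0"
    and Kx: "\<forall>y\<in>{0..1}. smooth01 (\<lambda>x. u1 (x, y)) \<and> C0 * Linf01 (deriv (\<lambda>x. u1 (x, y))) \<le> K"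
    and Ky: "\<forall>x\<in>{0..1}. smooth01 (\<lambda>y. u2 (x, y)) \<and> C0 * Linf01 (deriv (\<lambda>y. u2 (x, y))) \<le> K"
    and pen: "penalty_ok N M u1 u2 sL sR sD sU"
  defines "px \<equiv> Pdiag N p" and "py \<equiv> Pdiag M q"
  defines "Dx \<equiv> Dop px Qx" and "Dy \<equiv> Dop py Qy"
  defines "U1 \<equiv> ug N M u1" and "U2 \<equiv> ug N M u2"
  defines "c \<equiv> 2 * K + 4 * dmax N M Dx Dy U1 U2"
  defines "nrm \<equiv> \<lambda>s. ipP N M px py (V1 s) (V1 s) + ipP N M px py (V2 s) (V2 s)"
  defines "crl \<equiv> \<lambda>s. curlg N M Dx Dy (V1 s) (V2 s)"
  assumes sol: "solves eps N M px py Dx Dy U1 U2 sL sR sD sU V1 V2" and t: "0 \<le> t"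
  shows "nrm t + eps * integral {0..t} (\<lambda>s. exp (c * (t - s)) * ipP N M px py (crl s) (crl s))
         \<le> exp (c * t) * nrm 0"
proof -
  let ?W = "\<lambda>s. ipP N M px py (crl s) (crl s)"
  have cV: "\<forall>i<N. \<forall>j<M. continuous_on {0..t} (\<lambda>s. V1 s i j) \<and> continuous_on {0..t} (\<lambda>s. V2 s i j)"
  proof -
    have "{0..t} \<subseteq> {0::real..}" by auto
    then show ?thesis using sol unfolding solves_def by (meson continuous_on_subset)
  qed
  have cW: "continuous_on {0..t} ?W"
    unfolding crl_def using continuous_on_curlg[OF cV] by (intro continuous_on_ipP) auto
  have "\<exists>n'. (nrm has_real_derivative n') (at s) \<and> n' \<le> c * nrm s - 2 * eps * ?W s"
    if "0 < s" for s
  proof (intro exI conjI)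
    show "(nrm has_real_derivative
            2 * ipP N M px py (V1 s) (rhs1 eps N M px py Dx Dy U1 U2 sL sR sD sU (V1 s) (V2 s))
          + 2 * ipP N M px py (V2 s) (rhs2 eps N M px py Dx Dy U1 U2 sL sR sD sU (V1 s) (V2 s))) (at s)"
      using sol that unfolding nrm_def solves_def
      by (intro DERIV_add has_real_derivative_ipP_square) auto
    show "2 * ipP N M px py (V1 s) (rhs1 eps N M px py Dx Dy U1 U2 sL sR sD sU (V1 s) (V2 s))
          + 2 * ipP N M px py (V2 s) (rhs2 eps N M px py Dx Dy U1 U2 sL sR sD sU (V1 s) (V2 s))
          \<le> c * nrm s - 2 * eps * ?W s"
      unfolding c_def nrm_def crl_def px_def py_def Dx_def Dy_def U1_def U2_def
      by (rule energy_rate_bound[OF Sx Sy CBx CBy Kx Ky pen])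
  qed
  then have Gronwall: "nrm t + 2 * eps * integral {0..t} (\<lambda>s. exp (c * (t - s)) * ?W s)
      \<le> exp (c * t) * nrm 0"
    using t cW cV unfolding nrm_def
    by (intro Gronwall_dissipative) (auto intro!: continuous_on_add continuous_on_ipP)
  have "0 \<le> integral {0..t} (\<lambda>s. exp (c * (t - s)) * ?W s)"
  proof -
    have "\<forall>i<N. 0 \<le> px i" "\<forall>j<M. 0 \<le> py j"
      using Pdiag_pos[OF Sx] Pdiag_pos[OF Sy] unfolding px_def py_def by (auto intro: less_imp_le)
    then show ?thesis
      by (intro integral_nonneg integrable_continuous_interval continuous_intros cW)
        (auto intro!: mult_nonneg_nonneg ipP_nonneg)
  qed
  then have "eps * integral {0..t} (\<lambda>s. exp (c * (t - s)) * ?W s)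
      \<le> 2 * eps * integral {0..t} (\<lambda>s. exp (c * (t - s)) * ?W s)"
    using eps by (intro mult_right_mono) auto
  with Gronwall show ?thesis by linarith
qed

theorem theorem3p5:
  fixes u1 u2 :: "real \<times> real \<Rightarrow> real" and C0 :: real
  assumes "smooth_sq u1" and "smooth_sq u2"
  shows "\<exists>F :: real \<Rightarrow> real. \<forall>eps N M p Qx q Qy sL sR sD sU V1 V2 t.
    (let px = Pdiag N p; py = Pdiag M q; Dx = Dop px Qx; Dy = Dop py Qy;
         U1 = ug N M u1; U2 = ug N M u2; c = F (dmax N M Dx Dy U1 U2);
         nrm = (\<lambda>s. ipP N M px py (V1 s) (V1 s) + ipP N M px py (V2 s) (V2 s));
         crl = (\<lambda>s. curlg N M Dx Dy (V1 s) (V2 s))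
     in 0 < eps \<longrightarrow> SBP N p Qx \<longrightarrow> SBP M q Qy \<longrightarrow>
        commutator_bound N p Qx C0 \<longrightarrow> commutator_bound M q Qy C0 \<longrightarrow>
        penalty_ok N M u1 u2 sL sR sD sU \<longrightarrow>
        solves eps N M px py Dx Dy U1 U2 sL sR sD sU V1 V2 \<longrightarrow> 0 \<le> t \<longrightarrow>
        nrm t + eps * integral {0..t} (\<lambda>s. exp (c * (t - s)) * ipP N M px py (crl s) (crl s))
          \<le> exp (c * t) * nrm 0)"
proof -
  obtain K where Kx: "\<forall>y\<in>{0..1}. smooth01 (\<lambda>x. u1 (x, y)) \<and> C0 * Linf01 (deriv (\<lambda>x. u1 (x, y))) \<le> K"
    and Ky: "\<forall>x\<in>{0..1}. smooth01 (\<lambda>y. u2 (x, y)) \<and> C0 * Linf01 (deriv (\<lambda>y. u2 (x, y))) \<le> K"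
    using smooth_sq_commutator_constant[OF assms] by blast
  show ?thesis
    unfolding Let_def
    by (intro exI[of _ "\<lambda>d. 2 * K + 4 * d"] allI impI energy_estimate[OF _ _ _ _ _ Kx Ky])
qed

end
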